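(* Let $r\ge1$, let $\mathbf{a}=\langle a_1,\dots,a_s\rangle$ be an integer vector with $s\le r+1$, and let $\mathbf{b}=\langle b_1\rangle$ with $b_1=a_1+\cdots+a_s$. Put $\delta=a_1\varepsilon_1+\cdots+a_s\varepsilon_s-b_1\varepsilon_{r+1}\in\mathbb{Z}^{r+1}$. Then the map sending a juggling sequence $S\in\mathrm{JS}(\mathbf{a},\mathbf{b},r)$ to the multiset of positive roots $\{\varepsilon_i-\varepsilon_{i+j}\}$, with $\varepsilon_i-\varepsilon_{i+j}$ taken with multiplicity equal to the number of throws at time $i$ to height $j$ in $S$, is a bijection from $\mathrm{JS}(\mathbf{a},\mathbf{b},r)$ onto $P_{A_r}(\delta)$.
   Context: A (magic) juggling state is a finitely supported integer vector $\mathbf{s}=\langle s_1,s_2,\dots\rangle$ indexed by heights $1,2,\dots$ (trailing zeros omitted). A juggling sequence of length $n$ from $\mathbf{a}$ to $\mathbf{b}$ is a sequence $(\mathbf{s}_0,\dots,\mathbf{s}_n)$ with $\mathbf{s}_0=\mathbf{a}$, $\mathbf{s}_n=\mathbf{b}$, such that for each $1\le i\le n$ there are nonnegative integers $c^{(i)}_1,c^{(i)}_2,\dots$ (finitely many nonzero) with $\sum_k c^{(i)}_k=(\mathbf{s}_{i-1})_1$ and $(\mathbf{s}_i)_k=(\mathbf{s}_{i-1})_{k+1}+c^{(i)}_k$ for all $k\ge1$; $c^{(i)}_j$ is the number of throws at time $i$ to height $j$. $\mathrm{JS}(\mathbf{a},\mathbf{b},n)$ denotes the set of these (no hand capacity constraint).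 For $r\ge1$, $\varepsilon_1,\dots,\varepsilon_{r+1}$ is the standard basis of $\mathbb{R}^{r+1}$ and $\Phi^+_{A_r}=\{\varepsilon_i-\varepsilon_j:1\le i<j\le r+1\}$. For $\mu\in\mathbb{Z}^{r+1}$ and $\Lambda\subseteq\Phi^+_{A_r}$, $P_\Lambda(\mu)$ is the set of finite multisets of elements of $\Lambda$ whose sum is $\mu$ (the empty multiset is a partition of $0$), $K_\Lambda(\mu)=|P_\Lambda(\mu)|$; for $\Lambda=\Phi^+_{A_r}$ we write $P_{A_r}$ and $K_{A_r}$ (Kostant's partition function). *)

theory Defs
  imports Main "HOL-Library.Multiset" "HOL-Library.Function_Algebras"
begin

text \<open>Juggling states: finitely supported integer vectors indexed by heights 1,2,...;
  represented as functions nat => int whose value at index 0 is 0.\<close>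

definition juggling_state :: "(nat \<Rightarrow> int) \<Rightarrow> bool" where
  "juggling_state s \<longleftrightarrow> s 0 = 0 \<and> finite {k. s k \<noteq> 0}"

text \<open>One step of a juggling sequence from state s to state t with throw vector c
  (c j = number of throws to height j; index 0 unused).\<close>

definition juggling_step :: "(nat \<Rightarrow> int) \<Rightarrow> (nat \<Rightarrow> nat) \<Rightarrow> (nat \<Rightarrow> int) \<Rightarrow> bool" where
  "juggling_step s c t \<longleftrightarrow>
     c 0 = 0 \<and> finite {k. c k \<noteq> 0} \<and>
     (\<Sum>k\<in>{k. c k \<noteq> 0}. int (c k)) = s 1 \<and>
     (\<forall>k\<ge>1. t k = s (k + 1) + int (c k))"

definition JS :: "(nat \<Rightarrow> int) \<Rightarrow> (nat \<Rightarrow> int) \<Rightarrow> nat \<Rightarrow> (nat \<Rightarrow> int) list set" where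
  "JS a b n = {S. length S = n + 1 \<and> S ! 0 = a \<and> S ! n = b \<and>
      (\<forall>i<length S. juggling_state (S ! i)) \<and>
      (\<forall>i\<in>{1..n}. \<exists>c. juggling_step (S ! (i - 1)) c (S ! i))}"

definition throws :: "(nat \<Rightarrow> int) list \<Rightarrow> nat \<Rightarrow> nat \<Rightarrow> nat" where
  "throws S i j = nat ((S ! i) j - (S ! (i - 1)) (j + 1))"

text \<open>Vectors in Z^(r+1): functions nat => int (coordinates 1..r+1, zero elsewhere).\<close>

definition eps :: "nat \<Rightarrow> nat \<Rightarrow> int" where
  "eps i = (\<lambda>k. if k = i then 1 else 0)"

definition scale_vec :: "int \<Rightarrow> (nat \<Rightarrow> int) \<Rightarrow> nat \<Rightarrow> int" where
  "scale_vec c v = (\<lambda>k. c * v k)"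

definition pos_roots_A :: "nat \<Rightarrow> (nat \<Rightarrow> int) set" where
  "pos_roots_A r = {eps i - eps j | i j. 1 \<le> i \<and> i < j \<and> j \<le> r + 1}"

definition vector_partitions :: "(nat \<Rightarrow> int) set \<Rightarrow> (nat \<Rightarrow> int) \<Rightarrow> (nat \<Rightarrow> int) multiset set" where
  "vector_partitions \<Lambda> \<mu> = {M. set_mset M \<subseteq> \<Lambda> \<and> sum_mset M = \<mu>}"

abbreviation P_A :: "nat \<Rightarrow> (nat \<Rightarrow> int) \<Rightarrow> (nat \<Rightarrow> int) multiset set" where
  "P_A r \<equiv> vector_partitions (pos_roots_A r)"

definition js_to_roots :: "(nat \<Rightarrow> int) list \<Rightarrow> (nat \<Rightarrow> int) multiset" where
  "js_to_roots S = (\<Sum>i\<in>{1..length S - 1}. \<Sum>j\<in>{j. 1 \<le> j \<and> throws S i j \<noteq> 0}.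
      replicate_mset (throws S i j) (eps i - eps (i + j)))"

end

theory Submission
  imports Defs
begin

text \<open>A juggling sequence in \<open>JS(a,b,r)\<close> is determined by its throws \<open>c\<^sub>i\<^sub>j\<close>: the state at
  time \<open>t\<close> is \<open>a\<close> shifted down by \<open>t\<close> plus the balls thrown before \<open>t\<close> that are still in the air.
  The final state \<open>\<langle>b\<^sub>1\<rangle>\<close> forces every ball to land by time \<open>r + 1\<close>, so \<open>c\<^sub>i\<^sub>j = 0\<close> unless
  \<open>i + j \<le> r + 1\<close>, i.e. unless \<open>\<epsilon>\<^sub>i - \<epsilon>\<^sub>i\<^sub>+\<^sub>j\<close> is a positive root of \<open>A\<^sub>r\<close>; conversely the counts
  of a multiset of positive roots form such an array. The \<open>m\<close>-th coordinate of
  \<open>\<Sum> c\<^sub>i\<^sub>j (\<epsilon>\<^sub>i - \<epsilon>\<^sub>i\<^sub>+\<^sub>j)\<close> is the number of balls thrown at time \<open>m\<close> minus the number landing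
  at time \<open>m\<close>. By the juggling rule this is \<open>a\<^sub>m\<close> for \<open>m \<le> r\<close>, and it is
  \<open>-(a\<^sub>1 + \<dots> + a\<^sub>r)\<close> for \<open>m = r + 1\<close>, since the balls landing then make up \<open>\<langle>b\<^sub>1\<rangle>\<close>; these are
  exactly the coordinates of \<open>\<delta>\<close>.\<close>

definition throw_root :: "nat \<Rightarrow> nat \<Rightarrow> nat \<Rightarrow> int" where
  "throw_root i j = eps i - eps (i + j)"

definition throws_land_by :: "nat \<Rightarrow> (nat \<Rightarrow> nat \<Rightarrow> nat) \<Rightarrow> bool" where
  "throws_land_by n c \<longleftrightarrow> (\<forall>i j. c i j \<noteq> 0 \<longrightarrow> 1 \<le> i \<and> 1 \<le> j \<and> i + j \<le> n)"

definition roots_mset :: "nat \<Rightarrow> (nat \<Rightarrow> nat \<Rightarrow> nat) \<Rightarrow> (nat \<Rightarrow> int) multiset" where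
  "roots_mset r c = (\<Sum>i\<in>{1..r}. \<Sum>j\<in>{1..r}. replicate_mset (c i j) (throw_root i j))"

lemma sum_fun_apply: "(\<Sum>a\<in>A. f a) x = (\<Sum>a\<in>A. f a x)"
  by (induction A rule: infinite_finite_induct) auto

lemma throws_land_by_zero:
  "throws_land_by n c \<Longrightarrow> \<not> (1 \<le> i \<and> 1 \<le> j \<and> i + j \<le> n) \<Longrightarrow> c i j = 0"
  by (auto simp: throws_land_by_def)

lemma throws_land_by_sum_support:
  assumes "throws_land_by (r + 1) c"
  shows "finite {k. c i k \<noteq> 0}" and "(\<Sum>k\<in>{k. c i k \<noteq> 0}. int (c i k)) = (\<Sum>k\<in>{1..r}. int (c i k))"
proof -
  have support: "{k. c i k \<noteq> 0} \<subseteq> {1..r}"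
    using throws_land_by_zero[OF assms, of i] by fastforce
  then show "finite {k. c i k \<noteq> 0}"
    by (rule finite_subset) simp
  from support show "(\<Sum>k\<in>{k. c i k \<noteq> 0}. int (c i k)) = (\<Sum>k\<in>{1..r}. int (c i k))"
    by (intro sum.mono_neutral_left) auto
qed

lemma throws_land_by_sum_landing:
  assumes land: "throws_land_by (r + 1) c"
  shows "(\<Sum>i\<in>{1..r}. int (c i (m - i))) = (\<Sum>i\<in>{1..m-1}. int (c i (m - i)))"
proof -
  have "(\<Sum>i\<in>{1..r}. int (c i (m - i))) = (\<Sum>i\<in>{1..r + m}. int (c i (m - i)))"
    by (intro sum.mono_neutral_left) (auto intro!: throws_land_by_zero[OF land])
  also have "\<dots> = (\<Sum>i\<in>{1..m-1}. int (c i (m - i)))"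
    by (intro sum.mono_neutral_right) (auto intro!: throws_land_by_zero[OF land])
  finally show ?thesis .
qed

lemma throws_land_by_sum_late:
  assumes land: "throws_land_by n c" and "n < k + t"
  shows "(\<Sum>i\<in>{1..t}. int (c i (k + t - i))) = 0"
  using assms(2) by (intro sum.neutral) (auto intro!: throws_land_by_zero[OF land])

lemma eps_diff_eq_eps_diff:
  assumes "i \<noteq> i'" "p \<noteq> q" "eps i - eps i' = eps p - eps q"
  shows "i = p \<and> i' = q"
proof -
  have "eps i k - eps i' k = eps p k - eps q k" for k
    using assms(3) by (metis minus_apply)
  from this[of i] this[of i'] assms(1,2) show ?thesis
    by (auto simp: eps_def split: if_splits)
qed

lemma throw_root_inject:
  "1 \<le> j \<Longrightarrow> 1 \<le> q \<Longrightarrow> throw_root i j = throw_root p q \<longleftrightarrow> i = p \<and> j = q"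
  unfolding throw_root_def using eps_diff_eq_eps_diff[of i "i + j" p "p + q"] by auto

lemma throw_root_apply: "throw_root i j m = eps i m - eps (i + j) m"
  by (simp add: throw_root_def)

lemma throw_root_in_pos_roots_A:
  "throw_root i j \<in> pos_roots_A r \<longleftrightarrow> 1 \<le> i \<and> 1 \<le> j \<and> i + j \<le> r + 1"
proof
  assume "throw_root i j \<in> pos_roots_A r"
  then obtain p q where pq: "throw_root i j = eps p - eps q" "1 \<le> p" "p < q" "q \<le> r + 1"
    unfolding pos_roots_A_def by blast
  have "j \<noteq> 0"
  proof
    assume "j = 0"
    then have "(eps p - eps q) p = 0" using pq(1) by (simp add: throw_root_def)
    with pq(3) show False by (simp add: eps_def)
  qed
  with pq eps_diff_eq_eps_diff[of i "i + j" p q] show "1 \<le> i \<and> 1 \<le> j \<and> i + j \<le> r + 1"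
    by (simp add: throw_root_def)
next
  assume "1 \<le> i \<and> 1 \<le> j \<and> i + j \<le> r + 1"
  then show "throw_root i j \<in> pos_roots_A r"
    unfolding pos_roots_A_def throw_root_def by force
qed

lemma pos_roots_A_eq_throw_roots:
  "pos_roots_A r = {throw_root i j | i j. 1 \<le> i \<and> 1 \<le> j \<and> i + j \<le> r + 1}"
proof -
  have "eps i - eps k = throw_root i (k - i)" if "i < k" for i k
    using that by (simp add: throw_root_def)
  then have "pos_roots_A r \<subseteq> {throw_root i j | i j. 1 \<le> i \<and> 1 \<le> j \<and> i + j \<le> r + 1}"
    unfolding pos_roots_A_def by fastforce
  then show ?thesis using throw_root_in_pos_roots_A by blast
qed

lemma count_roots_mset_throw_root:
  assumes "i \<in> {1..r}" "j \<in> {1..r}"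
  shows "count (roots_mset r c) (throw_root i j) = c i j"
proof -
  have "count (roots_mset r c) (throw_root i j) =
      (\<Sum>p\<in>{1..r}. \<Sum>q\<in>{1..r}. if q = j then if p = i then c p q else 0 else 0)"
    unfolding roots_mset_def count_sum
    by (intro sum.cong refl) (use assms in \<open>auto simp: throw_root_inject\<close>)
  also have "\<dots> = c i j"
    using assms by (simp add: sum.delta)
  finally show ?thesis .
qed

lemma set_roots_mset:
  "set_mset (roots_mset r c) = {throw_root i j | i j. i \<in> {1..r} \<and> j \<in> {1..r} \<and> c i j \<noteq> 0}"
  unfolding roots_mset_def by (fastforce simp: set_mset_sum)

lemma set_roots_mset_subset_pos_roots_A:
  "throws_land_by (r + 1) c \<Longrightarrow> set_mset (roots_mset r c) \<subseteq> pos_roots_A r"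
  by (auto simp: set_roots_mset throw_root_in_pos_roots_A throws_land_by_def)

lemma count_roots_mset:
  assumes land: "throws_land_by (r + 1) c"
  shows "count (roots_mset r c) (throw_root i j) = c i j"
proof (cases "1 \<le> i \<and> 1 \<le> j \<and> i + j \<le> r + 1")
  case True
  then show ?thesis by (intro count_roots_mset_throw_root) auto
next
  case False
  then have "throw_root i j \<notin># roots_mset r c"
    using set_roots_mset_subset_pos_roots_A[OF land] throw_root_in_pos_roots_A by blast
  with False show ?thesis by (simp add: count_eq_zero_iff throws_land_by_zero[OF land])
qed

lemma bij_betw_roots_mset:
  "bij_betw (roots_mset r) {c. throws_land_by (r + 1) c} {M. set_mset M \<subseteq> pos_roots_A r}"
proof (rule bij_betw_byWitness[where f' = "\<lambda>M i j. count M (throw_root i j)"])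
  show "\<forall>c\<in>{c. throws_land_by (r + 1) c}. (\<lambda>i j. count (roots_mset r c) (throw_root i j)) = c"
    by (simp add: count_roots_mset)
  show "roots_mset r ` {c. throws_land_by (r + 1) c} \<subseteq> {M. set_mset M \<subseteq> pos_roots_A r}"
    using set_roots_mset_subset_pos_roots_A by blast
  have land: "throws_land_by (r + 1) (\<lambda>i j. count M (throw_root i j))"
    if "set_mset M \<subseteq> pos_roots_A r" for M
    using that by (auto simp: throws_land_by_def throw_root_in_pos_roots_A simp flip: count_eq_zero_iff)
  then show "(\<lambda>M i j. count M (throw_root i j)) ` {M. set_mset M \<subseteq> pos_roots_A r}
      \<subseteq> {c. throws_land_by (r + 1) c}"
    by blast
  show "\<forall>M\<in>{M. set_mset M \<subseteq> pos_roots_A r}. roots_mset r (\<lambda>i j. count M (throw_root i j)) = M"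
  proof
    fix M assume M: "M \<in> {M. set_mset M \<subseteq> pos_roots_A r}"
    show "roots_mset r (\<lambda>i j. count M (throw_root i j)) = M"
    proof (rule multiset_eqI)
      fix x
      show "count (roots_mset r (\<lambda>i j. count M (throw_root i j))) x = count M x"
      proof (cases "x \<in> pos_roots_A r")
        case True
        then obtain i j where "x = throw_root i j"
          unfolding pos_roots_A_eq_throw_roots by blast
        with land M show ?thesis by (simp add: count_roots_mset)
      next
        case False
        then have "x \<notin># M" "x \<notin># roots_mset r (\<lambda>i j. count M (throw_root i j))"
          using M set_roots_mset_subset_pos_roots_A[OF land] by blast+
        then show ?thesis by (simp add: not_in_iff)
      qed
    qed
  qed
qed

lemma sum_roots_mset_apply:
  assumes land: "throws_land_by (r + 1) c"
  shows "sum_mset (roots_mset r c) m =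
    (\<Sum>j\<in>{1..r}. int (c m j)) - (\<Sum>i\<in>{1..m-1}. int (c i (m - i)))"
proof -
  have out: "(\<Sum>i\<in>{1..r}. \<Sum>j\<in>{1..r}. int (c i j) * eps i m) = (\<Sum>j\<in>{1..r}. int (c m j))"
  proof (cases "m \<in> {1..r}")
    case True
    have "(\<Sum>i\<in>{1..r}. \<Sum>j\<in>{1..r}. int (c i j) * eps i m) =
        (\<Sum>i\<in>{1..r}. if i = m then \<Sum>j\<in>{1..r}. int (c m j) else 0)"
      by (intro sum.cong) (auto simp: eps_def)
    with True show ?thesis by simp
  next
    case False
    then have "c m j = 0" for j using throws_land_by_zero[OF land, of m j] by auto
    then show ?thesis using False by (auto simp: eps_def intro!: sum.neutral)
  qed
  have "(\<Sum>j\<in>{1..r}. int (c i j) * eps (i + j) m) = int (c i (m - i))" if "i \<in> {1..r}" for i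
  proof -
    have "(\<Sum>j\<in>{1..r}. int (c i j) * eps (i + j) m) =
        (\<Sum>j\<in>{1..r}. if j = m - i then (if i < m then int (c i (m - i)) else 0) else 0)"
      by (intro sum.cong refl) (auto simp: eps_def)
    also have "\<dots> = int (c i (m - i))"
      using throws_land_by_zero[OF land, of i "m - i"] that by (auto simp: sum.delta')
    finally show ?thesis .
  qed
  then have inflow: "(\<Sum>i\<in>{1..r}. \<Sum>j\<in>{1..r}. int (c i j) * eps (i + j) m) =
      (\<Sum>i\<in>{1..m-1}. int (c i (m - i)))"
    using throws_land_by_sum_landing[OF land, of m] by simp
  have "sum_mset (roots_mset r c) = (\<Sum>i\<in>{1..r}. \<Sum>j\<in>{1..r}. of_nat (c i j) * throw_root i j)"
    unfolding roots_mset_def by (simp flip: sum_comp_morphism)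
  then have "sum_mset (roots_mset r c) m =
      (\<Sum>i\<in>{1..r}. \<Sum>j\<in>{1..r}. int (c i j) * (eps i m - eps (i + j) m))"
    by (simp add: sum_fun_apply throw_root_apply)
  then show ?thesis
    using out inflow by (simp add: right_diff_distrib sum_subtractf)
qed

definition juggling_delta :: "nat \<Rightarrow> (nat \<Rightarrow> int) \<Rightarrow> nat \<Rightarrow> int" where
  "juggling_delta r a = (\<Sum>i\<in>{1..r+1}. scale_vec (a i) (eps i)) - scale_vec (\<Sum>i\<in>{1..r+1}. a i) (eps (r + 1))"

text \<open>Here \<open>c i j\<close> counts the throws at time \<open>i\<close> to height \<open>j\<close>: at each time \<open>m \<le> r\<close> the
  balls thrown are the \<open>a m\<close> balls initially at height \<open>m\<close> together with those landing at
  time \<open>m\<close>, and the balls landing at time \<open>r + 1\<close> make up the final state.\<close>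

definition juggling_throws :: "nat \<Rightarrow> (nat \<Rightarrow> int) \<Rightarrow> (nat \<Rightarrow> nat \<Rightarrow> nat) set" where
  "juggling_throws r a = {c. throws_land_by (r + 1) c \<and>
     (\<forall>m\<in>{1..r}. (\<Sum>j\<in>{1..r}. int (c m j)) = a m + (\<Sum>i\<in>{1..m-1}. int (c i (m - i)))) \<and>
     (\<Sum>i\<in>{1..r}. int (c i (r + 1 - i))) = (\<Sum>i\<in>{1..r}. a i)}"

lemma juggling_delta_apply:
  assumes "a 0 = 0" "\<forall>k > r + 1. a k = 0"
  shows "juggling_delta r a m = a m - (if m = r + 1 then \<Sum>i\<in>{1..r+1}. a i else 0)"
proof -
  have "(\<Sum>i\<in>{1..r+1}. a i * eps i m) = (\<Sum>i\<in>{1..r+1}. if i = m then a m else 0)"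
    by (intro sum.cong) (auto simp: eps_def)
  also have "\<dots> = a m"
    using assms by (auto simp: not_le)
  finally show ?thesis
    by (simp add: juggling_delta_def scale_vec_def sum_fun_apply eps_def)
qed

lemma sum_roots_mset_eq_juggling_delta_iff:
  assumes a0: "a 0 = 0" and a_vanish: "\<forall>k > r + 1. a k = 0"
    and land: "throws_land_by (r + 1) c"
  shows "sum_mset (roots_mset r c) = juggling_delta r a \<longleftrightarrow>
    (\<forall>m\<in>{1..r}. (\<Sum>j\<in>{1..r}. int (c m j)) = a m + (\<Sum>i\<in>{1..m-1}. int (c i (m - i)))) \<and>
      (\<Sum>i\<in>{1..r}. int (c i (r + 1 - i))) = (\<Sum>i\<in>{1..r}. a i)" (is "?sum \<longleftrightarrow> ?flow")
proof -
  have outflow_vanish: "(\<Sum>j\<in>{1..r}. int (c m j)) = 0" if "m \<notin> {1..r}" for m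
    using that by (auto intro!: sum.neutral throws_land_by_zero[OF land])
  have inflow_vanish: "(\<Sum>i\<in>{1..m-1}. int (c i (m - i))) = 0" if "m > r + 1" for m
    using that by (auto intro!: sum.neutral throws_land_by_zero[OF land])
  note net = sum_roots_mset_apply[OF land] and delta = juggling_delta_apply[OF a0 a_vanish]
  show ?thesis
  proof
    assume ?sum
    then have eq: "sum_mset (roots_mset r c) m = juggling_delta r a m" for m by simp
    show ?flow
    proof (intro conjI ballI)
      fix m assume "m \<in> {1..r}"
      with eq[of m] show "(\<Sum>j\<in>{1..r}. int (c m j)) = a m + (\<Sum>i\<in>{1..m-1}. int (c i (m - i)))"
        by (simp add: net delta)
    next
      from eq[of "r + 1"] outflow_vanish[of "r + 1"]
      show "(\<Sum>i\<in>{1..r}. int (c i (r + 1 - i))) = (\<Sum>i\<in>{1..r}. a i)"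
        by (simp add: net delta)
    qed
  next
    assume ?flow
    show ?sum
    proof
      fix m
      consider "m = 0" | "m \<in> {1..r}" | "m = r + 1" | "m > r + 1" by fastforce
      then show "sum_mset (roots_mset r c) m = juggling_delta r a m"
        by cases (use \<open>?flow\<close> outflow_vanish inflow_vanish a0 a_vanish in \<open>auto simp: net delta\<close>)
    qed
  qed
qed

lemma bij_betw_roots_mset_juggling_throws:
  assumes "a 0 = 0" "\<forall>k > r + 1. a k = 0"
  shows "bij_betw (roots_mset r) (juggling_throws r a) (P_A r (juggling_delta r a))"
proof -
  have "juggling_throws r a =
      {c \<in> {c. throws_land_by (r + 1) c}. sum_mset (roots_mset r c) = juggling_delta r a}"
    by (auto simp: juggling_throws_def sum_roots_mset_eq_juggling_delta_iff[OF assms])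
  moreover have "P_A r (juggling_delta r a) =
      {M \<in> {M. set_mset M \<subseteq> pos_roots_A r}. sum_mset M = juggling_delta r a}"
    by (auto simp: vector_partitions_def)
  ultimately show ?thesis
    by (simp only:) (rule bij_betw_Collect[OF bij_betw_roots_mset], simp)
qed

text \<open>\<^const>\<open>throws\<close> is meaningless at \<open>i = 0\<close>, \<open>j = 0\<close> and beyond the last state, so these
  entries are set to zero.\<close>

definition throw_array :: "(nat \<Rightarrow> int) list \<Rightarrow> nat \<Rightarrow> nat \<Rightarrow> nat" where
  "throw_array S i j = (if 1 \<le> i \<and> i < length S \<and> 1 \<le> j then throws S i j else 0)"

primrec juggle_states :: "(nat \<Rightarrow> int) \<Rightarrow> (nat \<Rightarrow> nat \<Rightarrow> nat) \<Rightarrow> nat \<Rightarrow> nat \<Rightarrow> int" where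
  "juggle_states a c 0 = a"
| "juggle_states a c (Suc t) = (\<lambda>k. if k = 0 then 0 else juggle_states a c t (k + 1) + int (c (Suc t) k))"

lemma shift_recurrence_solution:
  fixes s :: "nat \<Rightarrow> nat \<Rightarrow> int"
  assumes "\<And>t k. t < n \<Longrightarrow> 1 \<le> k \<Longrightarrow> s (Suc t) k = s t (k + 1) + int (c (Suc t) k)"
  shows "t \<le> n \<Longrightarrow> 1 \<le> k \<Longrightarrow> s t k = s 0 (k + t) + (\<Sum>i\<in>{1..t}. int (c i (k + t - i)))"
proof (induction t arbitrary: k)
  case (Suc t)
  have "s (Suc t) k = s t (k + 1) + int (c (Suc t) k)"
    using assms Suc.prems by simp
  also have "\<dots> = s 0 (k + Suc t) + (\<Sum>i\<in>{1..Suc t}. int (c i (k + Suc t - i)))"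
    using Suc by (simp add: sum.cl_ivl_Suc)
  finally show ?case .
qed simp

lemma juggle_states_apply:
  "1 \<le> k \<Longrightarrow> juggle_states a c t k = a (k + t) + (\<Sum>i\<in>{1..t}. int (c i (k + t - i)))"
  using shift_recurrence_solution[of t "juggle_states a c" c t k] by simp

lemma juggle_states_zero: "a 0 = 0 \<Longrightarrow> juggle_states a c t 0 = 0"
  by (cases t) simp_all

lemma juggling_step_throws:
  "juggling_step s c t \<Longrightarrow> 1 \<le> k \<Longrightarrow> c k = nat (t k - s (k + 1))"
  by (simp add: juggling_step_def)

lemma JS_step_throw_array:
  assumes S: "S \<in> JS a b n" and i: "i \<in> {1..n}"
  shows "juggling_step (S ! (i - 1)) (throw_array S i) (S ! i)"
proof -
  obtain c where step: "juggling_step (S ! (i - 1)) c (S ! i)"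
    using S i unfolding JS_def by blast
  have "throw_array S i = c"
  proof
    fix k
    show "throw_array S i k = c k"
      using S i step juggling_step_throws[OF step, of k]
      by (cases "k = 0") (auto simp: throw_array_def throws_def JS_def juggling_step_def)
  qed
  with step show ?thesis by simp
qed

lemma JS_nth_apply:
  assumes S: "S \<in> JS a b n" and "t \<le> n" "1 \<le> k"
  shows "(S ! t) k = a (k + t) + (\<Sum>i\<in>{1..t}. int (throw_array S i (k + t - i)))"
proof -
  have "(S ! Suc t) k = (S ! t) (k + 1) + int (throw_array S (Suc t) k)" if "t < n" "1 \<le> k" for t k
    using JS_step_throw_array[OF S, of "Suc t"] that by (simp add: juggling_step_def)
  with shift_recurrence_solution[of n "(!) S" "throw_array S"] assms show ?thesis
    by (simp add: JS_def)
qed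

lemma juggling_state_juggle_states:
  assumes land: "throws_land_by n c" and "a 0 = 0" and "\<forall>k > n. a k = 0"
  shows "juggling_state (juggle_states a c t)"
proof -
  have "juggle_states a c t k = 0" if "n < k" for k
    using that throws_land_by_sum_late[OF land, of k t] assms(3) by (simp add: juggle_states_apply)
  then have "{k. juggle_states a c t k \<noteq> 0} \<subseteq> {..n}"
    by (auto simp: not_le[symmetric])
  then show ?thesis
    by (simp add: juggling_state_def juggle_states_zero assms(2) finite_subset)
qed

lemma juggling_step_juggle_states:
  assumes land: "throws_land_by (r + 1) c" and i: "1 \<le> i"
    and outflow: "(\<Sum>j\<in>{1..r}. int (c i j)) = a i + (\<Sum>i'\<in>{1..i-1}. int (c i' (i - i')))"
  shows "juggling_step (juggle_states a c (i - 1)) (c i) (juggle_states a c i)"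
proof -
  have "(\<Sum>k\<in>{k. c i k \<noteq> 0}. int (c i k)) = juggle_states a c (i - 1) 1"
    using i outflow throws_land_by_sum_support(2)[OF land]
    by (simp add: juggle_states_apply)
  moreover obtain t where "i = Suc t" using i by (cases i) auto
  ultimately show ?thesis
    using throws_land_by_sum_support(1)[OF land] throws_land_by_zero[OF land, of i 0]
    by (simp add: juggling_step_def)
qed

lemma throw_array_juggle_states:
  assumes land: "throws_land_by (n + 1) c"
  shows "throw_array (map (juggle_states a c) [0..<n+1]) = c"
proof (intro ext)
  fix i j
  show "throw_array (map (juggle_states a c) [0..<n+1]) i j = c i j"
  proof (cases "1 \<le> i \<and> i \<le> n \<and> 1 \<le> j")
    case True
    then obtain t where "i = Suc t" by (cases i) auto
    with True show ?thesis
      by (simp add: throw_array_def throws_def nth_append del: upt_Suc)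
  next
    case False
    then show ?thesis
      using throws_land_by_zero[OF land, of i j] by (auto simp: throw_array_def)
  qed
qed

lemma js_to_roots_eq_roots_mset:
  assumes land: "throws_land_by (length S) (throw_array S)"
  shows "js_to_roots S = roots_mset (length S - 1) (throw_array S)"
  unfolding js_to_roots_def roots_mset_def
proof (rule sum.cong[OF refl])
  fix i assume i: "i \<in> {1..length S - 1}"
  have "{j. 1 \<le> j \<and> throws S i j \<noteq> 0} = {j. throw_array S i j \<noteq> 0}"
    using i by (auto simp: throw_array_def)
  also have "\<dots> \<subseteq> {1..length S - 1}"
    using throws_land_by_zero[OF land, of i] by fastforce
  finally show "(\<Sum>j\<in>{j. 1 \<le> j \<and> throws S i j \<noteq> 0}. replicate_mset (throws S i j) (eps i - eps (i + j))) =
      (\<Sum>j\<in>{1..length S - 1}. replicate_mset (throw_array S i j) (throw_root i j))"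
    using i by (intro sum.mono_neutral_cong_left) (auto simp: throw_array_def throw_root_def)
qed

locale juggling_to_height_one =
  fixes r :: nat and a b :: "nat \<Rightarrow> int"
  assumes a0: "a 0 = 0" and a_vanish: "\<forall>k > r + 1. a k = 0"
    and b_def: "b = (\<lambda>k. if k = 1 then \<Sum>i\<in>{1..r+1}. a i else 0)"
begin

lemma throws_land_by_throw_array:
  assumes S: "S \<in> JS a b r"
  shows "throws_land_by (r + 1) (throw_array S)"
proof -
  have late: "throw_array S i j = 0" if "r + 1 < i + j" for i j
  proof (cases "1 \<le> i \<and> i \<le> r")
    case True
    define k where "k = i + j - r"
    have k: "2 \<le> k" "k + r - i = j"
      using that True by (auto simp: k_def)
    have "(S ! r) k = 0"
      using S k by (simp add: JS_def b_def)
    then have "(\<Sum>i'\<in>{1..r}. int (throw_array S i' (k + r - i'))) = 0"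
      using JS_nth_apply[OF S, of r k] k a_vanish by simp
    then have "int (throw_array S i (k + r - i)) = 0"
      using True by (simp add: sum_nonneg_eq_0_iff)
    with k show ?thesis by simp
  next
    case False
    with S show ?thesis by (auto simp: throw_array_def JS_def)
  qed
  show ?thesis unfolding throws_land_by_def
  proof (intro allI impI)
    fix i j assume "throw_array S i j \<noteq> 0"
    with late[of i j] show "1 \<le> i \<and> 1 \<le> j \<and> i + j \<le> r + 1"
      by (cases "r + 1 < i + j") (auto simp: throw_array_def split: if_splits)
  qed
qed

lemma throw_array_in_juggling_throws:
  assumes S: "S \<in> JS a b r"
  shows "throw_array S \<in> juggling_throws r a"
proof -
  note land = throws_land_by_throw_array[OF S]
  have "(\<Sum>j\<in>{1..r}. int (throw_array S m j)) = a m + (\<Sum>i\<in>{1..m-1}. int (throw_array S i (m - i)))"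
    if m: "m \<in> {1..r}" for m
  proof -
    have "(\<Sum>j\<in>{1..r}. int (throw_array S m j)) = (S ! (m - 1)) 1"
      using JS_step_throw_array[OF S m] throws_land_by_sum_support(2)[OF land, of m]
      by (simp add: juggling_step_def)
    also have "\<dots> = a m + (\<Sum>i\<in>{1..m-1}. int (throw_array S i (m - i)))"
      using JS_nth_apply[OF S, of "m - 1" 1] m by (simp add: le_diff_conv)
    finally show ?thesis .
  qed
  moreover have "(\<Sum>i\<in>{1..r+1}. a i) = a (r + 1) + (\<Sum>i\<in>{1..r}. int (throw_array S i (r + 1 - i)))"
    using JS_nth_apply[OF S, of r 1] S by (simp add: JS_def b_def)
  ultimately show ?thesis
    using land by (simp add: juggling_throws_def)
qed

lemma JS_eq_juggle_states:
  assumes S: "S \<in> JS a b r"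
  shows "S = map (juggle_states a (throw_array S)) [0..<r+1]"
proof (rule nth_equalityI)
  show "length S = length (map (juggle_states a (throw_array S)) [0..<r+1])"
    using S by (simp add: JS_def)
  fix t assume "t < length S"
  then have t: "t \<le> r" using S by (simp add: JS_def)
  have "S ! t = juggle_states a (throw_array S) t"
  proof
    fix k
    show "(S ! t) k = juggle_states a (throw_array S) t k"
    proof (cases "k = 0")
      case True
      with S t show ?thesis by (simp add: JS_def juggling_state_def juggle_states_zero a0)
    next
      case False
      with t show ?thesis by (simp add: JS_nth_apply[OF S] juggle_states_apply)
    qed
  qed
  with t show "S ! t = map (juggle_states a (throw_array S)) [0..<r+1] ! t"
    by (simp add: nth_map_upt del: upt_Suc)
qed

lemma juggle_states_final:
  assumes c: "c \<in> juggling_throws r a"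
  shows "juggle_states a c r = b"
proof
  fix k :: nat
  have land: "throws_land_by (r + 1) c"
    and final: "(\<Sum>i\<in>{1..r}. int (c i (r + 1 - i))) = (\<Sum>i\<in>{1..r}. a i)"
    using c by (simp_all add: juggling_throws_def)
  consider "k = 0" | "k = 1" | "2 \<le> k" by fastforce
  then show "juggle_states a c r k = b k"
  proof cases
    case 1
    then show ?thesis by (simp add: juggle_states_zero a0 b_def)
  next
    case 2
    then show ?thesis using final by (simp add: juggle_states_apply b_def)
  next
    case 3
    then show ?thesis
      using throws_land_by_sum_late[OF land, of k r] a_vanish by (simp add: juggle_states_apply b_def)
  qed
qed

lemma juggle_states_in_JS:
  assumes c: "c \<in> juggling_throws r a"
  shows "map (juggle_states a c) [0..<r+1] \<in> JS a b r"
proof -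
  have land: "throws_land_by (r + 1) c"
    using c by (simp add: juggling_throws_def)
  have step: "juggling_step (juggle_states a c (i - 1)) (c i) (juggle_states a c i)"
    if "i \<in> {1..r}" for i
    using that c by (intro juggling_step_juggle_states) (auto simp: juggling_throws_def)
  have nth: "map (juggle_states a c) [0..<r+1] ! t = juggle_states a c t" if "t \<le> r" for t
    using that by (simp add: nth_map_upt del: upt_Suc)
  show ?thesis
    using juggling_state_juggle_states[OF land a0 a_vanish] juggle_states_final[OF c] step
    by (auto simp: JS_def nth simp del: upt_Suc) blast
qed

lemma bij_betw_throw_array: "bij_betw throw_array (JS a b r) (juggling_throws r a)"
proof (rule bij_betw_byWitness[where f' = "\<lambda>c. map (juggle_states a c) [0..<r+1]"])
  show "\<forall>S\<in>JS a b r. map (juggle_states a (throw_array S)) [0..<r+1] = S"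
    using JS_eq_juggle_states by auto
  show "\<forall>c\<in>juggling_throws r a. throw_array (map (juggle_states a c) [0..<r+1]) = c"
    unfolding juggling_throws_def using throw_array_juggle_states by blast
  show "throw_array ` JS a b r \<subseteq> juggling_throws r a"
    using throw_array_in_juggling_throws by blast
  show "(\<lambda>c. map (juggle_states a c) [0..<r+1]) ` juggling_throws r a \<subseteq> JS a b r"
    using juggle_states_in_JS by blast
qed

lemma js_to_roots_eq: "S \<in> JS a b r \<Longrightarrow> js_to_roots S = roots_mset r (throw_array S)"
  using js_to_roots_eq_roots_mset[of S] throws_land_by_throw_array[of S] by (simp add: JS_def)

end

theorem mainTheorem3:
  fixes r :: nat and a b :: "nat \<Rightarrow> int"
  assumes "r \<ge> 1"
    and "a 0 = 0" and "\<forall>k > r + 1. a k = 0"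
    and "b = (\<lambda>k. if k = 1 then (\<Sum>i\<in>{1..r+1}. a i) else 0)"
  shows "bij_betw js_to_roots (JS a b r)
           (P_A r ((\<Sum>i\<in>{1..r+1}. scale_vec (a i) (eps i)) - scale_vec (\<Sum>i\<in>{1..r+1}. a i) (eps (r + 1))))"
proof -
  interpret juggling_to_height_one r a b
    using assms(2-4) by unfold_locales
  have "bij_betw (roots_mset r \<circ> throw_array) (JS a b r) (P_A r (juggling_delta r a))"
    using bij_betw_throw_array bij_betw_roots_mset_juggling_throws[OF a0 a_vanish]
    by (rule bij_betw_trans)
  moreover have "js_to_roots S = (roots_mset r \<circ> throw_array) S" if "S \<in> JS a b r" for S
    using js_to_roots_eq[OF that] by simp
  ultimately have "bij_betw js_to_roots (JS a b r) (P_A r (juggling_delta r a))"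
    using bij_betw_cong by blast
  then show ?thesis
    by (simp only: juggling_delta_def)
qed

end
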